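(* Let $X$ be a non-empty finite set and $\mathcal{P}=\{P_1,\ldots,P_n\}$ a partition of $X$ indexed so that $|P_i|\le|P_{i+1}|$, with distinct block sizes $l_1<\cdots<l_r$. If $f\in\Sigma(X,\mathcal{P})$ and there is a companion of $\overline{f}$ in the subsemigroup generated by $S(X,\mathcal{P})\cup\mathcal{B}$, then $f$ lies in the subsemigroup generated by $S(X,\mathcal{P})\cup\mathcal{B}\cup\mathcal{C}$.
   Context: Maps are written on the right and composed left to right. $T(X,\mathcal{P})$ is the semigroup of maps $f:X\to X$ mapping each block of $\mathcal{P}$ into some block; $S(X,\mathcal{P})$ is its group of units; $\Sigma(X,\mathcal{P})$ is the set of $f\in T(X,\mathcal{P})$ whose image intersects every block. For $f\in T(X,\mathcal{P})$, $\overline{f}$ is the map on $\{1,\ldots,n\}$ with $(i)\overline{f}=j$ whenever $P_if\subseteq P_j$ (for $f\in\Sigma(X,\mathcal{P})$ this is a permutation). For $i\le r-1$, $\mathcal{B}_i$ is the set of $f\in\Sigma(X,\mathcal{P})$ for which there are blocks $P_j,P_{j'},P_k,P_{k'}$ (possibly $j=j'$ or $k=k'$) with $|P_j|=|P_{j'}|=l_i$, $|P_k|=|P_{k'}|=l_{i+1}$, such that $f$ maps $P_j$ injectively into $P_k$, maps $P_{k'}$ onto $P_{j'}$, and maps every other block bijectively onto a block of the same size; $\mathcal{B}=\bigcup_{i=1}^{r-1}\mathcal{B}_i$. For $i\le r$, $\mathcal{C}_i$ is the set of $f\in\Sigma(X,\mathcal{P})$ mapping each block into a block of the same size, such that one block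 of size $l_i$ has image of size $l_i-1$ and all other blocks are mapped injectively; $\mathcal{C}=\bigcup_{i=1}^r\mathcal{C}_i$. For a permutation $\pi$ of $\{1,\ldots,n\}$, a companion of $\pi$ is a $g\in\Sigma(X,\mathcal{P})$ with $\overline{g}=\pi$ such that $g|_{P_i}:P_i\to P_{(i)\pi}$ is injective whenever $|P_i|\le|P_{(i)\pi}|$ and surjective whenever $|P_i|\ge|P_{(i)\pi}|$. *)

theory Defs
  imports "HOL-Library.FuncSet"
begin

text \<open>Maps on X are extensional functions in the FuncSet X to X. Blocks are indexed 0..n-1.
  Composition left to right: f then g is compose X g f.\<close>

definition is_sorted_partition :: "'a set \<Rightarrow> (nat \<Rightarrow> 'a set) \<Rightarrow> nat \<Rightarrow> bool" where
  "is_sorted_partition X P n \<longleftrightarrow>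
     (\<forall>i<n. P i \<noteq> {}) \<and>
     (\<forall>i<n. \<forall>j<n. i \<noteq> j \<longrightarrow> P i \<inter> P j = {}) \<and>
     (\<Union>i<n. P i) = X \<and>
     (\<forall>i. Suc i < n \<longrightarrow> card (P i) \<le> card (P (Suc i)))"

definition distinct_sizes :: "(nat \<Rightarrow> 'a set) \<Rightarrow> nat \<Rightarrow> (nat \<Rightarrow> nat) \<Rightarrow> nat \<Rightarrow> bool" where
  "distinct_sizes P n l r \<longleftrightarrow>
     (\<forall>i. Suc i < r \<longrightarrow> l i < l (Suc i)) \<and>
     l ` {..<r} = (\<lambda>i. card (P i)) ` {..<n}"

definition T_sg :: "'a set \<Rightarrow> (nat \<Rightarrow> 'a set) \<Rightarrow> nat \<Rightarrow> ('a \<Rightarrow> 'a) set" where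
  "T_sg X P n = {f \<in> X \<rightarrow>\<^sub>E X. \<forall>i<n. \<exists>j<n. f ` P i \<subseteq> P j}"

definition S_grp :: "'a set \<Rightarrow> (nat \<Rightarrow> 'a set) \<Rightarrow> nat \<Rightarrow> ('a \<Rightarrow> 'a) set" where
  "S_grp X P n = {f \<in> T_sg X P n. \<exists>g \<in> T_sg X P n.
       compose X g f = restrict id X \<and> compose X f g = restrict id X}"

definition Sigma_sg :: "'a set \<Rightarrow> (nat \<Rightarrow> 'a set) \<Rightarrow> nat \<Rightarrow> ('a \<Rightarrow> 'a) set" where
  "Sigma_sg X P n = {f \<in> T_sg X P n. \<forall>i<n. f ` X \<inter> P i \<noteq> {}}"

definition fbar :: "(nat \<Rightarrow> 'a set) \<Rightarrow> nat \<Rightarrow> ('a \<Rightarrow> 'a) \<Rightarrow> nat \<Rightarrow> nat" where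
  "fbar P n f i = (THE j. j < n \<and> f ` P i \<subseteq> P j)"

definition B_i :: "'a set \<Rightarrow> (nat \<Rightarrow> 'a set) \<Rightarrow> nat \<Rightarrow> (nat \<Rightarrow> nat) \<Rightarrow> nat \<Rightarrow> ('a \<Rightarrow> 'a) set" where
  "B_i X P n l i = {f \<in> Sigma_sg X P n. \<exists>j<n. \<exists>j'<n. \<exists>k<n. \<exists>k'<n.
      card (P j) = l i \<and> card (P j') = l i \<and>
      card (P k) = l (Suc i) \<and> card (P k') = l (Suc i) \<and>
      inj_on f (P j) \<and> f ` P j \<subseteq> P k \<and>
      f ` P k' = P j' \<and>
      (\<forall>m<n. m \<noteq> j \<and> m \<noteq> k' \<longrightarrow>
         (\<exists>m'<n. card (P m') = card (P m) \<and> bij_betw f (P m) (P m')))}"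

definition B_set :: "'a set \<Rightarrow> (nat \<Rightarrow> 'a set) \<Rightarrow> nat \<Rightarrow> (nat \<Rightarrow> nat) \<Rightarrow> nat \<Rightarrow> ('a \<Rightarrow> 'a) set" where
  "B_set X P n l r = (\<Union>i\<in>{i. Suc i < r}. B_i X P n l i)"

definition C_i :: "'a set \<Rightarrow> (nat \<Rightarrow> 'a set) \<Rightarrow> nat \<Rightarrow> (nat \<Rightarrow> nat) \<Rightarrow> nat \<Rightarrow> ('a \<Rightarrow> 'a) set" where
  "C_i X P n l i = {f \<in> Sigma_sg X P n.
      (\<forall>m<n. \<exists>m'<n. card (P m') = card (P m) \<and> f ` P m \<subseteq> P m') \<and>
      (\<exists>j<n. card (P j) = l i \<and> card (f ` P j) = l i - 1 \<and>
         (\<forall>m<n. m \<noteq> j \<longrightarrow> inj_on f (P m)))}"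

definition C_set :: "'a set \<Rightarrow> (nat \<Rightarrow> 'a set) \<Rightarrow> nat \<Rightarrow> (nat \<Rightarrow> nat) \<Rightarrow> nat \<Rightarrow> ('a \<Rightarrow> 'a) set" where
  "C_set X P n l r = (\<Union>i<r. C_i X P n l i)"

definition companion :: "'a set \<Rightarrow> (nat \<Rightarrow> 'a set) \<Rightarrow> nat \<Rightarrow> (nat \<Rightarrow> nat) \<Rightarrow> ('a \<Rightarrow> 'a) \<Rightarrow> bool" where
  "companion X P n \<pi> g \<longleftrightarrow> g \<in> Sigma_sg X P n \<and>
     (\<forall>i<n. fbar P n g i = \<pi> i) \<and>
     (\<forall>i<n. card (P i) \<le> card (P (\<pi> i)) \<longrightarrow> inj_on g (P i)) \<and>
     (\<forall>i<n. card (P i) \<ge> card (P (\<pi> i)) \<longrightarrow> g ` P i = P (\<pi> i))"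

inductive_set gen_sg :: "'a set \<Rightarrow> ('a \<Rightarrow> 'a) set \<Rightarrow> ('a \<Rightarrow> 'a) set" for X A where
  base: "a \<in> A \<Longrightarrow> a \<in> gen_sg X A"
| comp: "a \<in> gen_sg X A \<Longrightarrow> b \<in> gen_sg X A \<Longrightarrow> compose X b a \<in> gen_sg X A"

end

theory Submission
  imports Defs
begin

text \<open>Let g be the given companion of f. Since g is injective on the blocks that it sends into
  blocks at least as large, and onto the target block otherwise, f factors as h1 ; g ; h2 with
  h1 and h2 mapping every block into itself: h1 moves each point of a block on which g is onto
  to a g-preimage of its f-image, and h2 sends g x to f x on the images of the blocks on which
  g is injective. These images lie in distinct blocks because the block permutation is injective.
  A map sending every block into itself is a unit if injective; otherwise it is a product of
  an element of C, which identifies two points of one block, and a block-preserving map with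
  a larger image.\<close>

lemma sorted_partition_block_subset:
  "is_sorted_partition X P n \<Longrightarrow> i < n \<Longrightarrow> P i \<subseteq> X"
  unfolding is_sorted_partition_def by blast

lemma sorted_partition_covers:
  "is_sorted_partition X P n \<Longrightarrow> x \<in> X \<Longrightarrow> \<exists>i<n. x \<in> P i"
  unfolding is_sorted_partition_def by blast

lemma sorted_partition_block_unique:
  "is_sorted_partition X P n \<Longrightarrow> i < n \<Longrightarrow> j < n \<Longrightarrow> x \<in> P i \<Longrightarrow> x \<in> P j \<Longrightarrow> i = j"
  unfolding is_sorted_partition_def by blast

lemma sorted_partition_block_nonempty:
  "is_sorted_partition X P n \<Longrightarrow> i < n \<Longrightarrow> P i \<noteq> {}"
  unfolding is_sorted_partition_def by blast

lemma gen_sg_mono: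
  assumes "A \<subseteq> B"
  shows "gen_sg X A \<subseteq> gen_sg X B"
proof
  fix x assume "x \<in> gen_sg X A"
  then show "x \<in> gen_sg X B"
    by induction (use assms in \<open>auto intro: gen_sg.intros\<close>)
qed

lemma fbar_eqI:
  assumes part: "is_sorted_partition X P n" and "i < n" "j < n" "f ` P i \<subseteq> P j"
  shows "fbar P n f i = j"
  unfolding fbar_def
proof (rule the_equality)
  show "j < n \<and> f ` P i \<subseteq> P j" using assms by blast
  fix j' assume j': "j' < n \<and> f ` P i \<subseteq> P j'"
  obtain x where x: "x \<in> P i"
    using sorted_partition_block_nonempty[OF part \<open>i < n\<close>] by blast
  have "f x \<in> P j'" "f x \<in> P j" using x j' assms(4) by blast+
  then show "j' = j" using sorted_partition_block_unique[OF part _ \<open>j < n\<close>] j' by blast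
qed

lemma fbar_less:
  assumes part: "is_sorted_partition X P n" and "f \<in> T_sg X P n" "i < n"
  shows "fbar P n f i < n"
proof -
  obtain j where "j < n" "f ` P i \<subseteq> P j" using assms(2,3) unfolding T_sg_def by blast
  then show ?thesis using fbar_eqI[OF part \<open>i < n\<close>] by simp
qed

lemma image_block_subset_fbar:
  assumes part: "is_sorted_partition X P n" and "f \<in> T_sg X P n" "i < n"
  shows "f ` P i \<subseteq> P (fbar P n f i)"
proof -
  obtain j where "j < n" "f ` P i \<subseteq> P j" using assms(2,3) unfolding T_sg_def by blast
  then show ?thesis using fbar_eqI[OF part \<open>i < n\<close>] by simp
qed

lemma Sigma_sg_fbar_inj:
  assumes part: "is_sorted_partition X P n" and f: "f \<in> Sigma_sg X P n"
  shows "inj_on (fbar P n f) {..<n}"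
proof -
  have fT: "f \<in> T_sg X P n" using f unfolding Sigma_sg_def by blast
  have "j \<in> fbar P n f ` {..<n}" if "j < n" for j
  proof -
    obtain x where x: "x \<in> X" "f x \<in> P j"
      using f \<open>j < n\<close> unfolding Sigma_sg_def by blast
    obtain i where i: "i < n" "x \<in> P i"
      using sorted_partition_covers[OF part x(1)] by blast
    have "f x \<in> P (fbar P n f i)"
      using image_block_subset_fbar[OF part fT i(1)] i(2) by blast
    then have "fbar P n f i = j"
      using sorted_partition_block_unique[OF part fbar_less[OF part fT i(1)] \<open>j < n\<close>] x(2)
      by blast
    with i show ?thesis by blast
  qed
  moreover have "fbar P n f ` {..<n} \<subseteq> {..<n}"
    using fbar_less[OF part fT] by blast
  ultimately have "fbar P n f ` {..<n} = {..<n}" by blast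
  then show ?thesis by (simp add: eq_card_imp_inj_on)
qed

section \<open>Block-preserving maps\<close>

definition block_preserving :: "'a set \<Rightarrow> (nat \<Rightarrow> 'a set) \<Rightarrow> nat \<Rightarrow> ('a \<Rightarrow> 'a) \<Rightarrow> bool" where
  "block_preserving X P n h \<longleftrightarrow> h \<in> X \<rightarrow>\<^sub>E X \<and> (\<forall>i<n. h ` P i \<subseteq> P i)"

lemma block_preserving_choice:
  assumes part: "is_sorted_partition X P n"
    and ex: "\<And>i x. i < n \<Longrightarrow> x \<in> P i \<Longrightarrow> \<exists>z\<in>P i. Q x z"
  shows "\<exists>h. block_preserving X P n h \<and> (\<forall>x\<in>X. Q x (h x))"
proof -
  define h where "h = (\<lambda>x\<in>X. SOME z. \<exists>i<n. x \<in> P i \<and> z \<in> P i \<and> Q x z)"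
  have h: "\<exists>i<n. x \<in> P i \<and> h x \<in> P i \<and> Q x (h x)" if x: "x \<in> X" for x
  proof -
    obtain i where "i < n" "x \<in> P i" using sorted_partition_covers[OF part x] by blast
    with ex have "\<exists>z. \<exists>i<n. x \<in> P i \<and> z \<in> P i \<and> Q x z" by blast
    from someI_ex[OF this] show ?thesis using x unfolding h_def by simp
  qed
  have "h ` P i \<subseteq> P i" if "i < n" for i
    using h sorted_partition_block_subset[OF part that]
      sorted_partition_block_unique[OF part that] by blast
  moreover have "h \<in> X \<rightarrow>\<^sub>E X"
    using h sorted_partition_block_subset[OF part] unfolding h_def by fastforce
  ultimately show ?thesis
    unfolding block_preserving_def using h by blast
qed

lemma block_preserving_preimage:
  assumes part: "is_sorted_partition X P n" and h: "block_preserving X P n h"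
    and "i < n" "x \<in> X" "h x \<in> P i"
  shows "x \<in> P i"
proof -
  obtain j where "j < n" "x \<in> P j" using sorted_partition_covers[OF part \<open>x \<in> X\<close>] by blast
  moreover have "h x \<in> P j" using h calculation unfolding block_preserving_def by blast
  ultimately show ?thesis using sorted_partition_block_unique[OF part \<open>i < n\<close>] assms(5) by blast
qed

lemma block_preserving_inj_in_S_grp:
  assumes fin: "finite X" and part: "is_sorted_partition X P n"
    and h: "block_preserving X P n h" and inj: "inj_on h X"
  shows "h \<in> S_grp X P n"
proof -
  have hE: "h \<in> X \<rightarrow>\<^sub>E X" using h unfolding block_preserving_def by blast
  then have "h ` X = X"
    using fin inj by (intro card_subset_eq) (auto simp: card_image)
  define g where "g = (\<lambda>x\<in>X. inv_into X h x)"
  have g_inv: "g (h x) = x" if "x \<in> X" for x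
    using that hE inj unfolding g_def by auto
  have h_inv: "h (g x) = x" if "x \<in> X" for x
    using that \<open>h ` X = X\<close> unfolding g_def by (simp add: f_inv_into_f)
  have gE: "g \<in> X \<rightarrow>\<^sub>E X"
    using \<open>h ` X = X\<close> unfolding g_def by (auto intro: inv_into_into)
  have "g ` P i \<subseteq> P i" if "i < n" for i
  proof
    fix y assume "y \<in> g ` P i"
    then obtain x where x: "x \<in> P i" "y = g x" by blast
    then have "x \<in> X" using sorted_partition_block_subset[OF part that] by blast
    then have "g x \<in> X" "h (g x) \<in> P i" using gE h_inv x by auto
    then show "y \<in> P i" using block_preserving_preimage[OF part h that] x by simp
  qed
  then have "g \<in> T_sg X P n" unfolding T_sg_def using gE by blast
  moreover have "h \<in> T_sg X P n" using h unfolding T_sg_def block_preserving_def by blast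
  moreover have "compose X g h = restrict id X" "compose X h g = restrict id X"
    by (auto simp: compose_def g_inv h_inv intro!: restrict_ext)
  ultimately show ?thesis unfolding S_grp_def by blast
qed

lemma collapse_in_C_set:
  assumes fin: "finite X" and part: "is_sorted_partition X P n" and ds: "distinct_sizes P n l r"
    and i: "i < n" and ab: "a \<in> P i" "b \<in> P i" "a \<noteq> b"
  shows "(\<lambda>x\<in>X. if x = b then a else x) \<in> C_set X P n l r"
proof -
  define c where "c = (\<lambda>x\<in>X. if x = b then a else x)"
  have Pi_X: "P i \<subseteq> X" using sorted_partition_block_subset[OF part i] .
  have b_only_in_i: "b \<notin> P k" if "k < n" "k \<noteq> i" for k
    using sorted_partition_block_unique[OF part that(1) i] ab(2) that(2) by blast
  have c_fix: "c x = x" if "x \<in> X" "x \<noteq> b" for x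
    using that unfolding c_def by simp
  have cP: "c ` P k \<subseteq> P k" if k: "k < n" for k
    using ab b_only_in_i[OF k] sorted_partition_block_subset[OF part k]
    by (cases "k = i") (auto simp: c_def)
  have cE: "c \<in> X \<rightarrow>\<^sub>E X" using ab Pi_X unfolding c_def by auto
  have "c ` X \<inter> P k \<noteq> {}" if k: "k < n" for k
  proof -
    obtain x where "x \<in> P k" "x \<noteq> b"
      using ab b_only_in_i[OF k] sorted_partition_block_nonempty[OF part k] by (cases "k = i") auto
    then show ?thesis
      using c_fix sorted_partition_block_subset[OF part k] by (metis IntI empty_iff image_eqI subsetD)
  qed
  then have cS: "c \<in> Sigma_sg X P n" unfolding Sigma_sg_def T_sg_def using cE cP by blast
  have "c ` P i = P i - {b}"
    using ab Pi_X by (force simp: c_def)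
  then have "card (c ` P i) = card (P i) - 1"
    using ab(2) Pi_X fin by (simp add: finite_subset)
  moreover have "\<forall>m<n. m \<noteq> i \<longrightarrow> inj_on c (P m)"
  proof (intro allI impI)
    fix m assume m: "m < n" "m \<noteq> i"
    then have "\<forall>x\<in>P m. c x = x"
      using c_fix b_only_in_i sorted_partition_block_subset[OF part m(1)] by blast
    then show "inj_on c (P m)" unfolding inj_on_def by simp
  qed
  moreover obtain idx where "idx < r" "l idx = card (P i)"
    using ds i unfolding distinct_sizes_def by (metis imageE imageI lessThan_iff)
  ultimately have "\<exists>j<n. card (P j) = l idx \<and> card (c ` P j) = l idx - 1 \<and>
      (\<forall>m<n. m \<noteq> j \<longrightarrow> inj_on c (P m))"
    using i by (intro exI[of _ i]) simp
  moreover have "\<forall>m<n. \<exists>m'<n. card (P m') = card (P m) \<and> c ` P m \<subseteq> P m'"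
    using cP by blast
  ultimately have "c \<in> C_i X P n l idx"
    unfolding C_i_def using cS by blast
  then show ?thesis unfolding C_set_def c_def using \<open>idx < r\<close> by blast
qed

lemma block_preserving_non_inj_split:
  assumes fin: "finite X" and part: "is_sorted_partition X P n" and ds: "distinct_sizes P n l r"
    and h: "block_preserving X P n h" and not_inj: "\<not> inj_on h X"
  obtains h' c where "block_preserving X P n h'" "card (h ` X) < card (h' ` X)"
    "c \<in> C_set X P n l r" "h = compose X h' c"
proof -
  have hE: "h \<in> X \<rightarrow>\<^sub>E X" and hP: "\<And>k. k < n \<Longrightarrow> h ` P k \<subseteq> P k"
    using h unfolding block_preserving_def by blast+
  obtain a b where ab: "a \<in> X" "b \<in> X" "a \<noteq> b" "h a = h b"
    using not_inj unfolding inj_on_def by blast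
  obtain i where i: "i < n" "b \<in> P i" using sorted_partition_covers[OF part ab(2)] by blast
  have Pi_X: "P i \<subseteq> X" using sorted_partition_block_subset[OF part i(1)] .
  have "a \<in> P i"
    using block_preserving_preimage[OF part h i(1) ab(1)] hP[OF i(1)] i(2) ab(4) by blast
  then have "\<not> inj_on h (P i)" using ab i(2) unfolding inj_on_def by blast
  then have "h ` P i \<noteq> P i"
    using Pi_X fin by (metis eq_card_imp_inj_on finite_subset)
  then obtain y where y: "y \<in> P i" "y \<notin> h ` P i" using hP[OF i(1)] by blast
  have y_new: "y \<notin> h ` X"
    using y block_preserving_preimage[OF part h i(1)] by blast
  define h' where "h' = h(b := y)"
  have "h' \<in> X \<rightarrow>\<^sub>E X" using hE y Pi_X ab(2) unfolding h'_def by auto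
  moreover have "h' ` P k \<subseteq> P k" if k: "k < n" for k
    using hP[OF k] y i sorted_partition_block_unique[OF part k i(1)]
    unfolding h'_def by (auto split: if_splits)
  ultimately have h'_bp: "block_preserving X P n h'" unfolding block_preserving_def by blast
  have "h b \<in> h ` (X - {b})" using ab by (metis DiffI imageI singletonD)
  then have "h ` X = h ` (X - {b})" using ab(2) by (metis image_insert insert_Diff insert_absorb)
  then have "h' ` X = insert y (h ` X)"
    using ab(2) unfolding h'_def by auto
  then have "card (h ` X) < card (h' ` X)" using y_new fin by simp
  moreover have "h = compose X h' (\<lambda>x\<in>X. if x = b then a else x)"
    using hE ab unfolding compose_def h'_def by (auto simp: fun_eq_iff extensional_def)
  ultimately show ?thesis
    using that h'_bp collapse_in_C_set[OF fin part ds i(1) \<open>a \<in> P i\<close> i(2) ab(3)] by blast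
qed

lemma block_preserving_in_gen_S_C:
  assumes fin: "finite X" and part: "is_sorted_partition X P n" and ds: "distinct_sizes P n l r"
  shows "block_preserving X P n h \<Longrightarrow> h \<in> gen_sg X (S_grp X P n \<union> C_set X P n l r)"
proof (induction "card X - card (h ` X)" arbitrary: h rule: less_induct)
  case less
  show ?case
  proof (cases "inj_on h X")
    case True
    then show ?thesis
      using block_preserving_inj_in_S_grp[OF fin part less.prems] by (blast intro: gen_sg.base)
  next
    case False
    obtain h' c where h': "block_preserving X P n h'" "card (h ` X) < card (h' ` X)"
      and c: "c \<in> C_set X P n l r" and h_eq: "h = compose X h' c"
      using block_preserving_non_inj_split[OF fin part ds less.prems False] .
    have "h' ` X \<subseteq> X" using h'(1) unfolding block_preserving_def by auto
    then have "card (h' ` X) \<le> card X" using fin by (simp add: card_mono)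
    then have "h' \<in> gen_sg X (S_grp X P n \<union> C_set X P n l r)"
      using less.hyps h' by simp
    then show ?thesis using c h_eq by (blast intro: gen_sg.intros)
  qed
qed

section \<open>Factorisation through block-preserving maps\<close>

lemma sorted_partition_permuted_block_unique:
  assumes part: "is_sorted_partition X P n"
    and \<pi>: "inj_on \<pi> {..<n}" "\<And>i. i < n \<Longrightarrow> \<pi> i < n"
    and "i < n" "i' < n" "y \<in> P (\<pi> i)" "y \<in> P (\<pi> i')"
  shows "i = i'"
proof -
  have "\<pi> i = \<pi> i'"
    using sorted_partition_block_unique[OF part \<pi>(2)[OF \<open>i < n\<close>] \<pi>(2)[OF \<open>i' < n\<close>]] assms(6,7) .
  then show ?thesis using inj_onD[OF \<pi>(1)] assms(4,5) by simp
qed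

lemma block_preserving_pre_correction:
  assumes part: "is_sorted_partition X P n"
    and covers: "\<And>i. i < n \<Longrightarrow> i \<notin> J \<Longrightarrow> f ` P i \<subseteq> g ` P i"
  obtains h1 where "block_preserving X P n h1"
    "\<And>x. x \<in> X \<Longrightarrow> x \<in> (\<Union>j\<in>J. P j) \<Longrightarrow> h1 x = x"
    "\<And>x. x \<in> X \<Longrightarrow> x \<notin> (\<Union>j\<in>J. P j) \<Longrightarrow> g (h1 x) = f x"
proof -
  let ?U = "\<Union>j\<in>J. P j"
  have "\<exists>z\<in>P i. (x \<in> ?U \<longrightarrow> z = x) \<and> (x \<notin> ?U \<longrightarrow> g z = f x)" if i: "i < n" "x \<in> P i" for i x
  proof (cases "x \<in> ?U")
    case True
    with i(2) show ?thesis by (intro bexI[of _ x]) simp_all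
  next
    case False
    with i have "f x \<in> g ` P i" using covers[OF i(1)] by blast
    then obtain z where "z \<in> P i" "g z = f x" by (metis imageE)
    with False show ?thesis by (intro bexI[of _ z]) simp_all
  qed
  from block_preserving_choice[OF part,
      where Q = "\<lambda>x z. (x \<in> ?U \<longrightarrow> z = x) \<and> (x \<notin> ?U \<longrightarrow> g z = f x)", OF this]
  obtain h1 where "block_preserving X P n h1"
    and h1: "\<forall>x\<in>X. (x \<in> ?U \<longrightarrow> h1 x = x) \<and> (x \<notin> ?U \<longrightarrow> g (h1 x) = f x)"
    by blast
  moreover have "h1 x = x" if "x \<in> X" "x \<in> ?U" for x
    using conjunct1[OF bspec[OF h1 that(1)]] that(2) by simp
  moreover have "g (h1 x) = f x" if "x \<in> X" "x \<notin> ?U" for x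
    using conjunct2[OF bspec[OF h1 that(1)]] that(2) by simp
  ultimately show ?thesis using that by blast
qed

lemma block_preserving_post_correction:
  assumes part: "is_sorted_partition X P n"
    and \<pi>: "inj_on \<pi> {..<n}" "\<And>i. i < n \<Longrightarrow> \<pi> i < n"
    and J: "J \<subseteq> {..<n}" "\<And>j. j \<in> J \<Longrightarrow> inj_on g (P j)"
    and fP: "\<And>j. j \<in> J \<Longrightarrow> f ` P j \<subseteq> P (\<pi> j)"
    and gP: "\<And>j. j \<in> J \<Longrightarrow> g ` P j \<subseteq> P (\<pi> j)"
  obtains h2 where "block_preserving X P n h2"
    "\<And>x. x \<in> (\<Union>j\<in>J. P j) \<Longrightarrow> h2 (g x) = f x"
    "\<And>y. y \<in> X \<Longrightarrow> y \<notin> g ` (\<Union>j\<in>J. P j) \<Longrightarrow> h2 y = y"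
proof -
  let ?U = "\<Union>j\<in>J. P j"
  have "\<exists>z\<in>P k. (\<forall>x\<in>?U. g x = y \<longrightarrow> z = f x) \<and> (y \<notin> g ` ?U \<longrightarrow> z = y)"
    if k: "k < n" "y \<in> P k" for k y
  proof (cases "y \<in> g ` ?U")
    case True
    then obtain j x where x: "j \<in> J" "x \<in> P j" "y = g x" by blast
    have "j < n" using J(1) x(1) by auto
    have "g x \<in> P (\<pi> j)" using gP[OF x(1)] x(2) by blast
    then have "\<pi> j = k"
      using sorted_partition_block_unique[OF part \<pi>(2)[OF \<open>j < n\<close>] k(1)] x(3) k(2) by simp
    then have "f x \<in> P k" using fP[OF x(1)] x(2) by blast
    moreover have "f x' = f x" if x': "x' \<in> ?U" "g x' = y" for x'
    proof -
      obtain j' where j': "j' \<in> J" "x' \<in> P j'" using x'(1) by blast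
      have "j' < n" using J(1) j'(1) by auto
      have "g x' \<in> P (\<pi> j')" using gP[OF j'(1)] j'(2) by blast
      with \<open>g x \<in> P (\<pi> j)\<close> have "j = j'"
        using sorted_partition_permuted_block_unique[OF part \<pi> \<open>j < n\<close> \<open>j' < n\<close>] x(3) x'(2)
        by simp
      then have "x' = x" using inj_onD[OF J(2)[OF x(1)]] x(2,3) j'(2) x'(2) by simp
      then show ?thesis by simp
    qed
    ultimately show ?thesis using True by (intro bexI[of _ "f x"]) auto
  next
    case False
    with k(2) show ?thesis by (intro bexI[of _ y]) auto
  qed
  from block_preserving_choice[OF part,
      where Q = "\<lambda>y z. (\<forall>x\<in>?U. g x = y \<longrightarrow> z = f x) \<and> (y \<notin> g ` ?U \<longrightarrow> z = y)", OF this]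
  obtain h2 where "block_preserving X P n h2"
    and h2: "\<forall>y\<in>X. (\<forall>x\<in>?U. g x = y \<longrightarrow> h2 y = f x) \<and> (y \<notin> g ` ?U \<longrightarrow> h2 y = y)"
    by blast
  moreover have "h2 (g x) = f x" if "x \<in> ?U" for x
  proof -
    from that obtain j where j: "j \<in> J" "x \<in> P j" by blast
    then have "j < n" using J(1) by auto
    have "g x \<in> P (\<pi> j)" using gP[OF j(1)] j(2) by blast
    then have "g x \<in> X" using sorted_partition_block_subset[OF part \<pi>(2)[OF \<open>j < n\<close>]] by blast
    then show ?thesis using bspec[OF conjunct1[OF bspec[OF h2 \<open>g x \<in> X\<close>]] that] by simp
  qed
  moreover have "h2 y = y" if "y \<in> X" "y \<notin> g ` ?U" for y
    using conjunct2[OF bspec[OF h2 that(1)]] that(2) by simp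
  ultimately show ?thesis using that by blast
qed

lemma block_preserving_factorization:
  assumes part: "is_sorted_partition X P n"
    and fE: "f \<in> X \<rightarrow>\<^sub>E X"
    and \<pi>: "inj_on \<pi> {..<n}" "\<And>i. i < n \<Longrightarrow> \<pi> i < n"
    and fP: "\<And>i. i < n \<Longrightarrow> f ` P i \<subseteq> P (\<pi> i)"
    and gP: "\<And>i. i < n \<Longrightarrow> g ` P i \<subseteq> P (\<pi> i)"
    and inj_or_covers: "\<And>i. i < n \<Longrightarrow> inj_on g (P i) \<or> f ` P i \<subseteq> g ` P i"
  obtains h1 h2 where "block_preserving X P n h1" "block_preserving X P n h2"
    "f = compose X h2 (compose X g h1)"
proof -
  define J where "J = {j. j < n \<and> inj_on g (P j)}"
  let ?U = "\<Union>j\<in>J. P j"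
  have covers: "f ` P i \<subseteq> g ` P i" if "i < n" "i \<notin> J" for i
    using inj_or_covers[OF that(1)] that unfolding J_def by auto
  obtain h1 where h1: "block_preserving X P n h1"
    and h1_U: "\<And>x. x \<in> X \<Longrightarrow> x \<in> ?U \<Longrightarrow> h1 x = x"
    and h1_not_U: "\<And>x. x \<in> X \<Longrightarrow> x \<notin> ?U \<Longrightarrow> g (h1 x) = f x"
    using block_preserving_pre_correction[OF part covers] by blast
  have J: "J \<subseteq> {..<n}" "\<And>j. j \<in> J \<Longrightarrow> inj_on g (P j)"
    and fgJ: "\<And>j. j \<in> J \<Longrightarrow> f ` P j \<subseteq> P (\<pi> j)" "\<And>j. j \<in> J \<Longrightarrow> g ` P j \<subseteq> P (\<pi> j)"
    using fP gP unfolding J_def by auto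
  obtain h2 where h2: "block_preserving X P n h2"
    and h2_gU: "\<And>x. x \<in> ?U \<Longrightarrow> h2 (g x) = f x"
    and h2_not_gU: "\<And>y. y \<in> X \<Longrightarrow> y \<notin> g ` ?U \<Longrightarrow> h2 y = y"
    using block_preserving_post_correction[OF part \<pi> J fgJ] by blast
  have "h2 (g (h1 x)) = f x" if x: "x \<in> X" for x
  proof (cases "x \<in> ?U")
    case True
    then show ?thesis using h1_U[OF x] h2_gU by simp
  next
    case False
    obtain i where i: "i < n" "x \<in> P i" using sorted_partition_covers[OF part x] by blast
    have "f x \<notin> g ` ?U"
    proof
      assume "f x \<in> g ` ?U"
      then obtain j x' where x': "j \<in> J" "x' \<in> P j" "f x = g x'" by blast
      have "j < n" using x'(1) unfolding J_def by simp
      have "f x \<in> P (\<pi> i)" "g x' \<in> P (\<pi> j)"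
        using fP[OF i(1)] gP[OF \<open>j < n\<close>] i(2) x'(2) by blast+
      then have "i = j"
        using sorted_partition_permuted_block_unique[OF part \<pi> i(1) \<open>j < n\<close>] x'(3) by simp
      then show False using False i(2) x'(1) by blast
    qed
    moreover have "f x \<in> X" using x fE by auto
    ultimately show ?thesis using h1_not_U[OF x False] h2_not_gU by simp
  qed
  then have "f = compose X h2 (compose X g h1)"
    using PiE_arb[OF fE] by (auto simp: compose_def)
  with h1 h2 show ?thesis by (rule that)
qed

lemma companion_image_block_subset:
  assumes "is_sorted_partition X P n" "companion X P n \<pi> g" "i < n"
  shows "g ` P i \<subseteq> P (\<pi> i)"
proof -
  have "g \<in> T_sg X P n" "fbar P n g i = \<pi> i"
    using assms(2,3) unfolding companion_def Sigma_sg_def by blast+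
  then show ?thesis using image_block_subset_fbar[OF assms(1) _ assms(3)] by metis
qed

lemma companion_inj_or_covers:
  assumes part: "is_sorted_partition X P n" and fT: "f \<in> T_sg X P n"
    and comp: "companion X P n (fbar P n f) g" and i: "i < n"
  shows "inj_on g (P i) \<or> f ` P i \<subseteq> g ` P i"
proof (cases "card (P i) \<le> card (P (fbar P n f i))")
  case True
  then show ?thesis using comp i unfolding companion_def by blast
next
  case False
  then have "g ` P i = P (fbar P n f i)" using comp i unfolding companion_def by simp
  then show ?thesis using image_block_subset_fbar[OF part fT i] by simp
qed

theorem lemma4p3:
  fixes X :: "'a set" and P :: "nat \<Rightarrow> 'a set" and n r :: nat
    and l :: "nat \<Rightarrow> nat" and f :: "'a \<Rightarrow> 'a"
  assumes "finite X" and "X \<noteq> {}"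
    and "is_sorted_partition X P n"
    and "distinct_sizes P n l r"
    and "f \<in> Sigma_sg X P n"
    and "\<exists>g. companion X P n (fbar P n f) g \<and>
               g \<in> gen_sg X (S_grp X P n \<union> B_set X P n l r)"
  shows "f \<in> gen_sg X (S_grp X P n \<union> B_set X P n l r \<union> C_set X P n l r)"
proof -
  let ?G = "S_grp X P n \<union> B_set X P n l r \<union> C_set X P n l r"
  note part = \<open>is_sorted_partition X P n\<close>
  obtain g where comp: "companion X P n (fbar P n f) g"
    and g: "g \<in> gen_sg X (S_grp X P n \<union> B_set X P n l r)"
    using assms(6) by blast
  have fT: "f \<in> T_sg X P n" using assms(5) unfolding Sigma_sg_def by blast
  then have fE: "f \<in> X \<rightarrow>\<^sub>E X" unfolding T_sg_def by blast
  obtain h1 h2 where h: "block_preserving X P n h1" "block_preserving X P n h2"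
    and f_eq: "f = compose X h2 (compose X g h1)"
    by (rule block_preserving_factorization[OF part fE Sigma_sg_fbar_inj[OF part assms(5)]
          fbar_less[OF part fT] image_block_subset_fbar[OF part fT]
          companion_image_block_subset[OF part comp] companion_inj_or_covers[OF part fT comp]])
  have "gen_sg X (S_grp X P n \<union> C_set X P n l r) \<subseteq> gen_sg X ?G"
    and "gen_sg X (S_grp X P n \<union> B_set X P n l r) \<subseteq> gen_sg X ?G"
    by (rule gen_sg_mono, blast)+
  then have "h1 \<in> gen_sg X ?G" "h2 \<in> gen_sg X ?G" "g \<in> gen_sg X ?G"
    using block_preserving_in_gen_S_C[OF \<open>finite X\<close> part assms(4)] h g by blast+
  then show ?thesis unfolding f_eq by (intro gen_sg.comp)
qed

end
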